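(* Let $X$ be a compact metric space and let $F_1,F_2$ be two $k$-iterated contraction systems on $X$ (same $k$). Let $A_1,A_2:X\to\mathbb{R}$ be potentials, normalized with respect to $F_1$ and $F_2$ respectively, with $A_2$ Lipschitz. Let $\mathscr{L}_i$ be the transfer operator defined by $(F_i,A_i)$ on continuous functions $X\to\mathbb{R}$. Then for every Borel probability measure $\mu$ on $X$, \[W_1(\mathscr{L}_1^*\mu,\mathscr{L}_2^*\mu)\le\operatorname{diam}X\cdot\|A_1-A_2\|_\infty+(\operatorname{Lip}(A_2)\operatorname{diam}X+1)\,d_\infty(F_1,F_2).\]
   Context: A $k$-multiset is an unordered list of $k$ elements with repetitions allowed; sums over it count multiplicities. A $k$-iterated contraction system (ICS) on $X$ assigns to each $x\in X$ a $k$-multiset $F(x)$ of points of $X$ such that for some $\theta\in(0,1)$ and all $x,y$ there are enumerations $F(x)=\{x_1,\dots,x_k\}$, $F(y)=\{y_1,\dots,y_k\}$ with $d(x_i,y_i)\le\theta d(x,y)$. $A_i$ normalized w.r.t. $F_i$ means $\sum_{y\in F_i(x)}e^{A_i(y)}=1$ for all $x$. $\mathscr{L}_if(x)=\sum_{y\in F_i(x)}e^{A_i(y)}f(y)$ and $\mathscr{L}_i^*$ is the dual on measures: $\int\varphi\,d(\mathscr{L}_i^*\mu)=\int\mathscr{L}_i\varphi\,d\mu$. $d_\infty(F_1,F_2)=\sup_{x\in X}\inf\sup_jd(y_1^j,y_2^j)$, where the infimum is over all enumerations $F_1(x)=\{y_1^1,\dots,y_1^k\}$, $F_2(x)=\{y_2^1,\dots,y_2^k\}$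 (i.e. bijections between the multisets). $W_1$ is the 1-Wasserstein distance: $W_1(\mu,\nu)=\inf_\pi\int d(x,y)\,d\pi$ over couplings $\pi$ of $\mu,\nu$. *)

theory Defs
  imports "HOL-Probability.Probability" "HOL-Library.Multiset"
begin

text \<open>The compact metric space X is represented as a type 'a of class metric_space
  with compact UNIV; Borel probability measures are measures M with sets M = sets borel.\<close>

definition is_ICS :: "nat \<Rightarrow> ('a::metric_space \<Rightarrow> 'a multiset) \<Rightarrow> bool" where
  "is_ICS k F \<longleftrightarrow> (\<forall>x. size (F x) = k) \<and>
     (\<exists>\<theta>::real. 0 < \<theta> \<and> \<theta> < 1 \<and>
        (\<forall>x y. \<exists>xs ys. mset xs = F x \<and> mset ys = F y \<and>
            (\<forall>i<k. dist (xs ! i) (ys ! i) \<le> \<theta> * dist x y)))"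

definition normalized :: "('a \<Rightarrow> real) \<Rightarrow> ('a \<Rightarrow> 'a multiset) \<Rightarrow> bool" where
  "normalized A F \<longleftrightarrow> (\<forall>x. (\<Sum>y\<in>#F x. exp (A y)) = 1)"

definition transfer_op :: "('a \<Rightarrow> 'a multiset) \<Rightarrow> ('a \<Rightarrow> real) \<Rightarrow> ('a \<Rightarrow> real) \<Rightarrow> 'a \<Rightarrow> real" where
  "transfer_op F A f x = (\<Sum>y\<in>#F x. exp (A y) * f y)"

text \<open>nu is the dual transfer operator applied to mu: a finite Borel measure with
  int phi d nu = int (L phi) d mu for every continuous phi.\<close>
definition is_dual_transfer :: "('a::metric_space \<Rightarrow> 'a multiset) \<Rightarrow> ('a \<Rightarrow> real) \<Rightarrow> 'a measure \<Rightarrow> 'a measure \<Rightarrow> bool" where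
  "is_dual_transfer F A \<mu> \<nu> \<longleftrightarrow> finite_measure \<nu> \<and> sets \<nu> = sets borel \<and>
     (\<forall>\<phi>::'a \<Rightarrow> real. continuous_on UNIV \<phi> \<longrightarrow>
        integral\<^sup>L \<nu> \<phi> = integral\<^sup>L \<mu> (transfer_op F A \<phi>))"

definition couplings :: "'a::metric_space measure \<Rightarrow> 'a measure \<Rightarrow> ('a \<times> 'a) measure set" where
  "couplings \<mu> \<nu> = {\<pi>. prob_space \<pi> \<and> sets \<pi> = sets (borel \<Otimes>\<^sub>M borel) \<and>
      distr \<pi> borel fst = \<mu> \<and> distr \<pi> borel snd = \<nu>}"

definition W1 :: "'a::metric_space measure \<Rightarrow> 'a measure \<Rightarrow> real" where
  "W1 \<mu> \<nu> = (INF \<pi>\<in>couplings \<mu> \<nu>. integral\<^sup>L \<pi> (\<lambda>z. dist (fst z) (snd z)))"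

definition d_inf :: "('a::metric_space \<Rightarrow> 'a multiset) \<Rightarrow> ('a \<Rightarrow> 'a multiset) \<Rightarrow> real" where
  "d_inf F1 F2 = (SUP x. INF p\<in>{(xs, ys). mset xs = F1 x \<and> mset ys = F2 x}.
      Max (insert 0 {dist (fst p ! j) (snd p ! j) | j. j < length (fst p)}))"

definition sup_norm :: "('a \<Rightarrow> real) \<Rightarrow> real" where
  "sup_norm f = (SUP x. \<bar>f x\<bar>)"

definition Lip :: "('a::metric_space \<Rightarrow> real) \<Rightarrow> real" where
  "Lip f = Inf {C. lipschitz_on C UNIV f}"

end

theory Submission
  imports Defs "HOL-Combinatorics.Permutations"
begin

text \<open>Fix x. Given enumerations a, b of F1 x and F2 x with point weights p j = exp (A1 (a!j)) and
  q j = exp (A2 (b!j)), put mass min (p j) (q j) on (a!j, b!j) and couple the leftover masses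
  independently. The leftover has mass at most sup_norm (A1 - A2) + Lip A2 * m, where m is the
  largest distance d(a!j, b!j), so the cost of this coupling of the two dual transfer measures at
  x is at most m + diam X * (sup_norm (A1 - A2) + Lip A2 * m). To make the construction depend
  measurably on x, average over all pairs of enumerations with the weights max 0 (c - m) for some
  c > d_inf F1 F2; the contraction property of the ICS makes the average continuous in x.
  Integrating this kernel against mu gives a coupling of the two dual measures, and c can be taken
  arbitrarily close to d_inf F1 F2.\<close>

section \<open>Enumerations of the multisets of an ICS\<close>

lemma is_ICS_size: "is_ICS k F \<Longrightarrow> size (F x) = k"
  unfolding is_ICS_def by blast

lemma is_ICS_length: "is_ICS k F \<Longrightarrow> mset xs = F x \<Longrightarrow> length xs = k"
  by (metis is_ICS_size size_mset)

lemma is_ICS_close_enumeration: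
  assumes ics: "is_ICS k F" and ys: "mset ys = F x"
  shows "\<exists>zs. mset zs = F y \<and> (\<forall>i<k. dist (zs!i) (ys!i) \<le> dist y x)"
proof -
  obtain \<theta> :: real where \<theta>: "0 < \<theta>" "\<theta> < 1" and
    H: "\<forall>x y. \<exists>xs ys. mset xs = F x \<and> mset ys = F y \<and> (\<forall>i<k. dist (xs ! i) (ys ! i) \<le> \<theta> * dist x y)"
    using ics unfolding is_ICS_def by blast
  obtain xs' zs' where xz: "mset xs' = F x" "mset zs' = F y"
    and d: "\<forall>i<k. dist (xs' ! i) (zs' ! i) \<le> \<theta> * dist x y" using H by blast
  have lx: "length xs' = k" and lz: "length zs' = k"
    using xz by (simp_all add: is_ICS_length[OF ics])
  from ys xz(1) have "mset ys = mset xs'" by simp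
  then obtain \<rho> where \<rho>: "\<rho> permutes {..<length xs'}" "permute_list \<rho> xs' = ys"
    by (rule mset_eq_permutation)
  define zs where "zs = permute_list \<rho> zs'"
  have "mset zs = F y" unfolding zs_def using \<rho>(1) lx lz xz(2) by (simp add: mset_permute_list)
  moreover have "dist (zs!i) (ys!i) \<le> dist y x" if i: "i < k" for i
  proof -
    have "\<rho> i < k" using permutes_in_image[OF \<rho>(1)] i lx by auto
    moreover have "zs!i = zs'!(\<rho> i)" "ys!i = xs'!(\<rho> i)"
      unfolding zs_def using \<rho> lx lz i by (auto simp: permute_list_nth)
    ultimately have "dist (zs!i) (ys!i) \<le> \<theta> * dist x y" using d by (simp add: dist_commute)
    also have "\<dots> \<le> dist y x" using \<theta> by (simp add: dist_commute mult_left_le_one_le)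
    finally show ?thesis .
  qed
  ultimately show ?thesis by blast
qed

definition index_perms :: "nat \<Rightarrow> (nat \<Rightarrow> nat) set" where
  "index_perms k = {\<sigma>. \<sigma> permutes {..<k}}"

lemma finite_index_perms [simp]: "finite (index_perms k)"
  unfolding index_perms_def by (simp add: finite_permutations)

lemma sum_index_perms_permute_list_mset_eq:
  assumes "length ys = k" "mset xs = mset ys"
  shows "(\<Sum>\<sigma>\<in>index_perms k. G (permute_list \<sigma> xs)) = (\<Sum>\<sigma>\<in>index_perms k. G (permute_list \<sigma> ys))"
proof -
  from assms(2) obtain \<rho> where \<rho>: "\<rho> permutes {..<k}" "permute_list \<rho> ys = xs"
    using assms(1) by (metis mset_eq_permutation)
  have "(\<Sum>\<sigma>\<in>index_perms k. G (permute_list \<sigma> xs)) =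
        (\<Sum>\<sigma>\<in>index_perms k. G (permute_list (\<rho> \<circ> \<sigma>) ys))"
    using \<rho> assms(1) by (intro sum.cong) (auto simp: index_perms_def permute_list_compose)
  also have "\<dots> = (\<Sum>\<sigma>\<in>index_perms k. G (permute_list \<sigma> ys))"
  proof (rule sum.reindex_bij_witness[where i="\<lambda>\<sigma>. inv \<rho> \<circ> \<sigma>" and j="\<lambda>\<sigma>. \<rho> \<circ> \<sigma>"])
    fix \<sigma> assume "\<sigma> \<in> index_perms k"
    then show "inv \<rho> \<circ> (\<rho> \<circ> \<sigma>) = \<sigma>" "\<rho> \<circ> \<sigma> \<in> index_perms k"
      "\<rho> \<circ> (inv \<rho> \<circ> \<sigma>) = \<sigma>" "inv \<rho> \<circ> \<sigma> \<in> index_perms k"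
      using \<rho>(1) permutes_inv[OF \<rho>(1)]
      by (auto simp: index_perms_def o_assoc permutes_inv_o permutes_compose)
  qed simp
  finally show ?thesis .
qed

definition enumeration :: "('a \<Rightarrow> 'b multiset) \<Rightarrow> 'a \<Rightarrow> 'b list" where
  "enumeration F x = (SOME xs. mset xs = F x)"

lemma mset_enumeration [simp]: "mset (enumeration F x) = F x"
  unfolding enumeration_def by (rule someI_ex) (rule ex_mset)

lemma length_enumeration: "is_ICS k F \<Longrightarrow> length (enumeration F x) = k"
  by (simp add: is_ICS_length)

lemma mset_permute_enumeration:
  "is_ICS k F \<Longrightarrow> \<sigma> \<in> index_perms k \<Longrightarrow> mset (permute_list \<sigma> (enumeration F x)) = F x"
  by (simp add: index_perms_def length_enumeration)

definition seq_continuous_lists :: "nat \<Rightarrow> ('a::metric_space list \<Rightarrow> 'a list \<Rightarrow> real) \<Rightarrow> bool" where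
  "seq_continuous_lists k G \<longleftrightarrow> (\<forall>a b as bs. length a = k \<longrightarrow> length b = k \<longrightarrow>
     (\<forall>n. length (as n) = k \<and> length (bs n) = k) \<longrightarrow>
     (\<forall>j<k. (\<lambda>n. as n ! j) \<longlonglongrightarrow> a ! j) \<longrightarrow> (\<forall>j<k. (\<lambda>n. bs n ! j) \<longlonglongrightarrow> b ! j) \<longrightarrow>
     (\<lambda>n. G (as n) (bs n)) \<longlonglongrightarrow> G a b)"

lemma seq_continuous_listsI:
  assumes "\<And>a b as bs. length a = k \<Longrightarrow> length b = k \<Longrightarrow> (\<And>n. length (as n) = k) \<Longrightarrow>
    (\<And>n. length (bs n) = k) \<Longrightarrow> (\<And>j. j < k \<Longrightarrow> (\<lambda>n. as n ! j) \<longlonglongrightarrow> a ! j) \<Longrightarrow>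
    (\<And>j. j < k \<Longrightarrow> (\<lambda>n. bs n ! j) \<longlonglongrightarrow> b ! j) \<Longrightarrow> (\<lambda>n. G (as n) (bs n)) \<longlonglongrightarrow> G a b"
  shows "seq_continuous_lists k G"
  using assms unfolding seq_continuous_lists_def by blast

lemma seq_continuous_listsD:
  assumes "seq_continuous_lists k G" "length a = k" "length b = k"
    "\<And>n. length (as n) = k" "\<And>n. length (bs n) = k"
    "\<And>j. j < k \<Longrightarrow> (\<lambda>n. as n ! j) \<longlonglongrightarrow> a ! j" "\<And>j. j < k \<Longrightarrow> (\<lambda>n. bs n ! j) \<longlonglongrightarrow> b ! j"
  shows "(\<lambda>n. G (as n) (bs n)) \<longlonglongrightarrow> G a b"
  using assms unfolding seq_continuous_lists_def by blast

lemma seq_continuous_lists_mult: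
  assumes "seq_continuous_lists k G" "seq_continuous_lists k H"
  shows "seq_continuous_lists k (\<lambda>a b. G a b * H a b)"
  by (rule seq_continuous_listsI, rule tendsto_mult)
     (rule seq_continuous_listsD[OF assms(1)] seq_continuous_listsD[OF assms(2)]; assumption)+

definition sym_sum ::
    "nat \<Rightarrow> ('a \<Rightarrow> 'a multiset) \<Rightarrow> ('a \<Rightarrow> 'a multiset) \<Rightarrow> ('a list \<Rightarrow> 'a list \<Rightarrow> real) \<Rightarrow> 'a \<Rightarrow> real" where
  "sym_sum k F1 F2 G x = (\<Sum>\<sigma>\<in>index_perms k. \<Sum>\<tau>\<in>index_perms k.
      G (permute_list \<sigma> (enumeration F1 x)) (permute_list \<tau> (enumeration F2 x)))"

lemma sym_sum_any_enumeration:
  assumes "is_ICS k F1" "is_ICS k F2" "mset xs = F1 x" "mset ys = F2 x"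
  shows "sym_sum k F1 F2 G x =
    (\<Sum>\<sigma>\<in>index_perms k. \<Sum>\<tau>\<in>index_perms k. G (permute_list \<sigma> xs) (permute_list \<tau> ys))"
proof -
  have lxs: "length xs = k" and lys: "length ys = k" using assms by (simp_all add: is_ICS_length)
  have "sym_sum k F1 F2 G x = (\<Sum>\<sigma>\<in>index_perms k. \<Sum>\<tau>\<in>index_perms k.
      G (permute_list \<sigma> (enumeration F1 x)) (permute_list \<tau> ys))"
    unfolding sym_sum_def
    by (intro sum.cong refl sum_index_perms_permute_list_mset_eq[where G="\<lambda>l. G _ l"])
       (use lys assms in auto)
  also have "\<dots> = (\<Sum>\<tau>\<in>index_perms k. \<Sum>\<sigma>\<in>index_perms k.
      G (permute_list \<sigma> xs) (permute_list \<tau> ys))"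
    by (subst sum.swap)
       (intro sum.cong refl sum_index_perms_permute_list_mset_eq[where G="\<lambda>l. G l _"], use lxs assms in auto)
  also have "\<dots> = (\<Sum>\<sigma>\<in>index_perms k. \<Sum>\<tau>\<in>index_perms k.
      G (permute_list \<sigma> xs) (permute_list \<tau> ys))"
    by (rule sum.swap)
  finally show ?thesis .
qed

lemma isCont_sym_sum:
  assumes ics1: "is_ICS k F1" and ics2: "is_ICS k F2" and G: "seq_continuous_lists k G"
  shows "isCont (sym_sum k F1 F2 G) x"
  unfolding continuous_at_sequentially
proof (intro allI impI)
  fix u assume u: "u \<longlonglongrightarrow> x"
  let ?e1 = "enumeration F1 x" and ?e2 = "enumeration F2 x"
  have close: "\<exists>zs. \<forall>n. mset (zs n) = F (u n) \<and> (\<forall>i<k. dist (zs n ! i) (e ! i) \<le> dist (u n) x)"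
    if "is_ICS k F" "mset e = F x" for F and e :: "'a list"
    using is_ICS_close_enumeration[OF that] by (intro choice allI) blast
  obtain zs where zs: "\<And>n. mset (zs n) = F1 (u n)" "\<And>n i. i<k \<Longrightarrow> dist (zs n ! i) (?e1 ! i) \<le> dist (u n) x"
    using close[OF ics1 mset_enumeration[of F1 x]] by blast
  obtain ws where ws: "\<And>n. mset (ws n) = F2 (u n)" "\<And>n i. i<k \<Longrightarrow> dist (ws n ! i) (?e2 ! i) \<le> dist (u n) x"
    using close[OF ics2 mset_enumeration[of F2 x]] by blast
  have lengths: "length (zs n) = k" "length (ws n) = k" "length ?e1 = k" "length ?e2 = k" for n
    using zs(1) ws(1) ics1 ics2 by (simp_all add: is_ICS_length)
  have u0: "(\<lambda>n. dist (u n) x) \<longlonglongrightarrow> 0" using u by (rule tendsto_dist_iff[THEN iffD1])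
  have conv: "(\<lambda>n. zs n ! i) \<longlonglongrightarrow> ?e1 ! i" "(\<lambda>n. ws n ! i) \<longlonglongrightarrow> ?e2 ! i" if "i < k" for i
    using zs(2) ws(2) that
    by (auto intro!: tendsto_dist_iff[THEN iffD2] Lim_null_comparison[OF _ u0] always_eventually)
  have pair: "(\<lambda>n. G (permute_list \<sigma> (zs n)) (permute_list \<tau> (ws n)))
        \<longlonglongrightarrow> G (permute_list \<sigma> ?e1) (permute_list \<tau> ?e2)"
    if "\<sigma> \<in> index_perms k" "\<tau> \<in> index_perms k" for \<sigma> \<tau>
  proof (rule seq_continuous_listsD[OF G])
    have \<sigma>: "\<sigma> permutes {..<k}" and \<tau>: "\<tau> permutes {..<k}"
      using that by (simp_all add: index_perms_def)
    fix j assume j: "j < k"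
    have "\<sigma> j < k" "\<tau> j < k"
      using permutes_in_image[OF \<sigma>, of j] permutes_in_image[OF \<tau>, of j] j by simp_all
    moreover have "permute_list \<sigma> l ! j = l ! \<sigma> j" "permute_list \<tau> l ! j = l ! \<tau> j"
      if "length l = k" for l :: "'a list"
      using permute_list_nth[of \<sigma> l j] permute_list_nth[of \<tau> l j] \<sigma> \<tau> j that by simp_all
    ultimately show "(\<lambda>n. permute_list \<sigma> (zs n) ! j) \<longlonglongrightarrow> permute_list \<sigma> ?e1 ! j"
      "(\<lambda>n. permute_list \<tau> (ws n) ! j) \<longlonglongrightarrow> permute_list \<tau> ?e2 ! j"
      using conv lengths by simp_all
  qed (simp_all add: lengths)
  have "(\<lambda>n. \<Sum>\<sigma>\<in>index_perms k. \<Sum>\<tau>\<in>index_perms k. G (permute_list \<sigma> (zs n)) (permute_list \<tau> (ws n)))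
        \<longlonglongrightarrow> (\<Sum>\<sigma>\<in>index_perms k. \<Sum>\<tau>\<in>index_perms k. G (permute_list \<sigma> ?e1) (permute_list \<tau> ?e2))"
    by (rule tendsto_sum, rule tendsto_sum, rule pair)
  then show "(sym_sum k F1 F2 G \<circ> u) \<longlonglongrightarrow> sym_sum k F1 F2 G x"
    unfolding comp_def sym_sum_any_enumeration[OF ics1 ics2 zs(1) ws(1)] unfolding sym_sum_def .
qed

section \<open>Weighted point lists and the matching coupling\<close>

definition list_integral :: "('b \<times> real) list \<Rightarrow> ('b \<Rightarrow> real) \<Rightarrow> real" where
  "list_integral L h = (\<Sum>z\<leftarrow>L. snd z * h (fst z))"

lemma list_integral_append [simp]: "list_integral (L @ M) h = list_integral L h + list_integral M h"
  by (simp add: list_integral_def)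

lemma list_integral_concat: "list_integral (concat Ls) h = (\<Sum>L\<leftarrow>Ls. list_integral L h)"
  by (induction Ls) (simp_all add: list_integral_def)

lemma list_integral_scale:
  "list_integral (map (\<lambda>z. (fst z, c * snd z)) L) h = c * list_integral L h"
  by (induction L) (simp_all add: list_integral_def algebra_simps)

lemma list_integral_nonneg:
  "(\<And>z. z \<in> set L \<Longrightarrow> 0 \<le> snd z) \<Longrightarrow> (\<And>z. 0 \<le> h z) \<Longrightarrow> 0 \<le> list_integral L h"
  unfolding list_integral_def by (induction L) auto

lemma tendsto_list_integral:
  "(\<And>z. (\<lambda>n. h n z) \<longlonglongrightarrow> h' z) \<Longrightarrow> (\<lambda>n. list_integral L (h n)) \<longlonglongrightarrow> list_integral L h'"
  unfolding list_integral_def by (induction L) (auto intro!: tendsto_add tendsto_mult)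

lemma sum_list_snd_filter: "(\<Sum>z\<leftarrow>filter (\<lambda>z. fst z \<in> A) L. snd z) = list_integral L (indicator A)"
  by (induction L) (auto simp: list_integral_def)

lemma sum_weights_at_eq_list_integral:
  assumes "finite A" "fst ` set L \<subseteq> A"
  shows "(\<Sum>a\<in>A. f a * (\<Sum>z\<leftarrow>filter (\<lambda>z. fst z = a) L. snd z)) = list_integral L f"
  using assms(2)
proof (induction L)
  case (Cons z L)
  have "fst z \<in> A" using Cons.prems by simp
  have "(\<Sum>a\<in>A. f a * (\<Sum>z'\<leftarrow>filter (\<lambda>z'. fst z' = a) (z # L). snd z'))
      = (\<Sum>a\<in>A. (if fst z = a then f a * snd z else 0) + f a * (\<Sum>z'\<leftarrow>filter (\<lambda>z'. fst z' = a) L. snd z'))"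
    by (intro sum.cong refl) (simp add: distrib_left)
  also have "\<dots> = f (fst z) * snd z + list_integral L f"
    using Cons \<open>fst z \<in> A\<close> assms(1) by (simp add: sum.distrib sum.delta)
  finally show ?case by (simp add: list_integral_def)
qed (simp add: list_integral_def)

lemma integral_pmf_of_list:
  assumes "pmf_of_list_wf L"
  shows "integral\<^sup>L (measure_pmf (pmf_of_list L)) f = list_integral L (f :: 'a \<Rightarrow> real)"
proof -
  have "integral\<^sup>L (measure_pmf (pmf_of_list L)) f = (\<Sum>a\<in>fst ` set L. f a * pmf (pmf_of_list L) a)"
    by (rule integral_measure_pmf_real) (use set_pmf_of_list[OF assms] in auto)
  also have "\<dots> = list_integral L f"
    by (simp add: pmf_pmf_of_list[OF assms] sum_weights_at_eq_list_integral)
  finally show ?thesis .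
qed

definition excess :: "(nat \<Rightarrow> real) \<Rightarrow> (nat \<Rightarrow> real) \<Rightarrow> nat \<Rightarrow> real" where
  "excess p q j = p j - min (p j) (q j)"

definition defect :: "nat \<Rightarrow> (nat \<Rightarrow> real) \<Rightarrow> (nat \<Rightarrow> real) \<Rightarrow> real" where
  "defect k p q = (\<Sum>j<k. excess p q j)"

lemma excess_nonneg: "0 \<le> excess p q j"
  by (simp add: excess_def)

lemma defect_nonneg: "0 \<le> defect k p q"
  unfolding defect_def by (intro sum_nonneg excess_nonneg)

lemma defect_commute: "(\<Sum>j<k. p j) = (\<Sum>j<k. q j) \<Longrightarrow> defect k p q = defect k q p"
  by (simp add: defect_def excess_def sum_subtractf min.commute)

lemma defect_eq_0_iff: "defect k p q = 0 \<longleftrightarrow> (\<forall>j<k. min (p j) (q j) = p j)"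
  unfolding defect_def by (subst sum_nonneg_eq_0_iff) (auto simp: excess_def)

lemma abs_sum_excess_product_le:
  assumes "\<And>i l. \<bar>h i l\<bar> \<le> B"
  shows "\<bar>\<Sum>i<k. \<Sum>l<k. excess p q i * excess q p l * h i l\<bar> \<le> B * defect k p q * defect k q p"
proof -
  have "\<bar>\<Sum>i<k. \<Sum>l<k. excess p q i * excess q p l * h i l\<bar>
      \<le> (\<Sum>i<k. \<Sum>l<k. excess p q i * excess q p l * \<bar>h i l\<bar>)"
    by (rule order_trans[OF sum_abs sum_mono], rule order_trans[OF sum_abs sum_mono])
       (simp add: abs_mult excess_nonneg)
  also have "\<dots> \<le> (\<Sum>i<k. \<Sum>l<k. excess p q i * excess q p l * B)"
    by (intro sum_mono mult_left_mono assms) (simp add: excess_nonneg)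
  also have "\<dots> = B * defect k p q * defect k q p"
    by (simp add: defect_def sum_product sum_distrib_left mult_ac)
  finally show ?thesis .
qed

text \<open>The two defects agree whenever the total masses do; dividing by their maximum rather than by
  one of them keeps the construction continuous in p and q.\<close>

definition match_coupling ::
    "nat \<Rightarrow> (nat \<Rightarrow> real) \<Rightarrow> (nat \<Rightarrow> real) \<Rightarrow> 'a list \<Rightarrow> 'b list \<Rightarrow> (('a \<times> 'b) \<times> real) list" where
  "match_coupling k p q a b = map (\<lambda>j. ((a!j, b!j), min (p j) (q j))) [0..<k] @
     concat (map (\<lambda>i. map (\<lambda>l. ((a!i, b!l),
        excess p q i * excess q p l / max (defect k p q) (defect k q p))) [0..<k]) [0..<k])"

lemma list_integral_match_coupling:
  "list_integral (match_coupling k p q a b) h = (\<Sum>j<k. min (p j) (q j) * h (a!j, b!j)) +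
     (\<Sum>i<k. \<Sum>l<k. excess p q i * excess q p l * h (a!i, b!l)) / max (defect k p q) (defect k q p)"
  unfolding match_coupling_def list_integral_append list_integral_concat
  by (simp add: list_integral_def sum_list_sum_nth atLeast0LessThan sum_divide_distrib)

lemma match_coupling_nonneg:
  assumes "\<And>j. 0 \<le> p j" "\<And>j. 0 \<le> q j"
  shows "z \<in> set (match_coupling k p q a b) \<Longrightarrow> 0 \<le> snd z"
  unfolding match_coupling_def using assms
  by (auto intro!: divide_nonneg_nonneg mult_nonneg_nonneg excess_nonneg
           simp: le_max_iff_disj defect_nonneg)

lemma list_integral_match_coupling_swap:
  "list_integral (match_coupling k p q a b) h = list_integral (match_coupling k q p b a) (\<lambda>z. h (snd z, fst z))"
  unfolding list_integral_match_coupling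
  by (subst sum.swap) (simp add: min.commute max.commute mult_ac)

lemma list_integral_match_coupling_fst:
  assumes "(\<Sum>j<k. p j) = (\<Sum>j<k. q j)"
  shows "list_integral (match_coupling k p q a b) (\<lambda>z. \<phi> (fst z)) = (\<Sum>j<k. p j * \<phi> (a!j))"
proof -
  have defect: "defect k q p = defect k p q" using defect_commute[OF assms] by simp
  have residual: "(\<Sum>i<k. \<Sum>l<k. excess p q i * excess q p l * \<phi> (a!i))
      = (\<Sum>i<k. excess p q i * \<phi> (a!i)) * defect k p q"
    unfolding defect[symmetric] defect_def[of k q p] sum_product by (intro sum.cong refl) (simp add: mult_ac)
  show ?thesis
  proof (cases "defect k p q = 0")
    case True
    then show ?thesis
      unfolding list_integral_match_coupling using defect_eq_0_iff[of k p q] defect by simp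
  next
    case False
    have "list_integral (match_coupling k p q a b) (\<lambda>z. \<phi> (fst z))
        = (\<Sum>j<k. min (p j) (q j) * \<phi> (a!j)) + (\<Sum>i<k. excess p q i * \<phi> (a!i))"
      unfolding list_integral_match_coupling using False by (simp add: residual defect)
    also have "\<dots> = (\<Sum>j<k. p j * \<phi> (a!j))"
      by (simp add: excess_def sum.distrib[symmetric] algebra_simps)
    finally show ?thesis .
  qed
qed

lemma list_integral_match_coupling_snd:
  assumes "(\<Sum>j<k. p j) = (\<Sum>j<k. q j)"
  shows "list_integral (match_coupling k p q a b) (\<lambda>z. \<phi> (snd z)) = (\<Sum>j<k. q j * \<phi> (b!j))"
  using list_integral_match_coupling_fst[where p=q and q=p and a=b and b=a and \<phi>=\<phi>] assms
  by (simp add: list_integral_match_coupling_swap[of k p q a b])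

definition match_dist :: "nat \<Rightarrow> 'a::metric_space list \<Rightarrow> 'a list \<Rightarrow> real" where
  "match_dist k a b = Max (insert 0 ((\<lambda>j. dist (a!j) (b!j)) ` {..<k}))"

lemma match_dist_ge: "j < k \<Longrightarrow> dist (a!j) (b!j) \<le> match_dist k a b"
  unfolding match_dist_def by (intro Max_ge) auto

lemma match_dist_nonneg: "0 \<le> match_dist k a b"
  unfolding match_dist_def by (intro Max_ge) auto

lemma list_integral_match_coupling_dist_le:
  fixes a b :: "'a::metric_space list"
  assumes p: "\<And>j. 0 \<le> p j" and q: "\<And>j. 0 \<le> q j" and D: "\<And>y z::'a. dist y z \<le> D"
  shows "list_integral (match_coupling k p q a b) (\<lambda>z. dist (fst z) (snd z))
    \<le> (\<Sum>j<k. p j) * match_dist k a b + D * defect k p q"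
proof -
  let ?R = "max (defect k p q) (defect k q p)"
  have D0: "0 \<le> D" using D[of undefined undefined] by simp
  have diagonal: "(\<Sum>j<k. min (p j) (q j) * dist (a!j) (b!j)) \<le> (\<Sum>j<k. p j) * match_dist k a b"
    unfolding sum_distrib_right using p q
    by (intro sum_mono mult_mono) (auto simp: match_dist_ge match_dist_nonneg)
  have "(\<Sum>i<k. \<Sum>l<k. excess p q i * excess q p l * dist (a!i) (b!l)) \<le> D * defect k p q * defect k q p"
    by (rule order_trans[OF abs_ge_self abs_sum_excess_product_le]) (simp add: D)
  also have "\<dots> \<le> D * defect k p q * ?R"
    using D0 by (intro mult_left_mono) (auto simp: defect_nonneg)
  finally have "(\<Sum>i<k. \<Sum>l<k. excess p q i * excess q p l * dist (a!i) (b!l)) / ?R \<le> D * defect k p q"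
    using D0 defect_nonneg[of k p q] defect_nonneg[of k q p]
    by (cases "?R = 0") (simp_all add: pos_divide_le_eq)
  then show ?thesis
    using diagonal unfolding list_integral_match_coupling by simp
qed

lemma tendsto_divide_max_of_bound:
  fixes N R S :: "nat \<Rightarrow> real"
  assumes N: "N \<longlonglongrightarrow> n" and R: "R \<longlonglongrightarrow> r" and S: "S \<longlonglongrightarrow> s"
    and nonneg: "\<And>i. 0 \<le> R i" "\<And>i. 0 \<le> S i"
    and bound: "\<And>i. \<bar>N i\<bar> \<le> B * R i * S i" and "0 \<le> B"
  shows "(\<lambda>i. N i / max (R i) (S i)) \<longlonglongrightarrow> n / max r s"
proof (cases "max r s = 0")
  case False
  then show ?thesis by (intro tendsto_divide tendsto_max N R S)
next
  case True
  have "0 \<le> r" "0 \<le> s" using LIMSEQ_le_const[OF R] LIMSEQ_le_const[OF S] nonneg by auto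
  then have "r = 0" using True max.cobounded1[of r s] by linarith
  then have BR: "(\<lambda>i. B * R i) \<longlonglongrightarrow> 0" using tendsto_mult[OF tendsto_const R, of B] by simp
  have "\<bar>N i / max (R i) (S i)\<bar> \<le> B * R i" for i
  proof (cases "max (R i) (S i) = 0")
    case False
    then have pos: "0 < max (R i) (S i)" using nonneg[of i] by linarith
    have "B * R i * S i \<le> B * R i * max (R i) (S i)"
      using \<open>0 \<le> B\<close> nonneg[of i] by (intro mult_left_mono) auto
    then have "\<bar>N i\<bar> \<le> B * R i * max (R i) (S i)" using bound[of i] by linarith
    then show ?thesis using pos by (simp add: abs_divide pos_divide_le_eq)
  qed (use \<open>0 \<le> B\<close> nonneg in simp)
  then have "(\<lambda>i. N i / max (R i) (S i)) \<longlonglongrightarrow> 0"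
    by (intro Lim_null_comparison[OF _ BR] always_eventually) simp
  then show ?thesis using True by simp
qed

lemma tendsto_list_integral_match_coupling:
  fixes as bs :: "nat \<Rightarrow> 'a::metric_space list" and h :: "'a \<times> 'a \<Rightarrow> real"
  assumes p: "\<And>j. j < k \<Longrightarrow> (\<lambda>n. ps n j) \<longlonglongrightarrow> p j" and q: "\<And>j. j < k \<Longrightarrow> (\<lambda>n. qs n j) \<longlonglongrightarrow> q j"
    and a: "\<And>j. j < k \<Longrightarrow> (\<lambda>n. as n ! j) \<longlonglongrightarrow> a ! j" and b: "\<And>j. j < k \<Longrightarrow> (\<lambda>n. bs n ! j) \<longlonglongrightarrow> b ! j"
    and h: "continuous_on UNIV h" and hB: "\<And>z. \<bar>h z\<bar> \<le> B"
  shows "(\<lambda>n. list_integral (match_coupling k (ps n) (qs n) (as n) (bs n)) h)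
    \<longlonglongrightarrow> list_integral (match_coupling k p q a b) h"
proof -
  have "0 \<le> B" using hB[of undefined] by simp
  have hab: "(\<lambda>n. h (as n ! i, bs n ! l)) \<longlonglongrightarrow> h (a ! i, b ! l)" if "i < k" "l < k" for i l
    using h a b that by (intro isCont_tendsto_compose[of _ h] tendsto_Pair) (auto simp: continuous_on_eq_continuous_at)
  have excess: "(\<lambda>n. excess (ps n) (qs n) j) \<longlonglongrightarrow> excess p q j" "(\<lambda>n. excess (qs n) (ps n) j) \<longlonglongrightarrow> excess q p j"
    if "j < k" for j
    unfolding excess_def using p q that by (auto intro!: tendsto_intros)
  have "(\<lambda>n. \<Sum>j<k. min (ps n j) (qs n j) * h (as n ! j, bs n ! j))
      \<longlonglongrightarrow> (\<Sum>j<k. min (p j) (q j) * h (a ! j, b ! j))"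
    using p q hab by (intro tendsto_sum tendsto_mult tendsto_min) auto
  moreover have "(\<lambda>n. (\<Sum>i<k. \<Sum>l<k. excess (ps n) (qs n) i * excess (qs n) (ps n) l * h (as n ! i, bs n ! l))
        / max (defect k (ps n) (qs n)) (defect k (qs n) (ps n)))
      \<longlonglongrightarrow> (\<Sum>i<k. \<Sum>l<k. excess p q i * excess q p l * h (a ! i, b ! l))
        / max (defect k p q) (defect k q p)"
    unfolding defect_def
    by (rule tendsto_divide_max_of_bound[OF _ _ _ _ _ abs_sum_excess_product_le[unfolded defect_def] \<open>0 \<le> B\<close>])
       (use excess hab hB in \<open>auto intro!: tendsto_sum tendsto_mult sum_nonneg excess_nonneg\<close>)
  ultimately show ?thesis
    unfolding list_integral_match_coupling by (rule tendsto_add)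
qed

lemma exp_sub_min_exp_le: "exp (s::real) - min (exp s) (exp t) \<le> exp s * \<bar>s - t\<bar>"
proof (cases "s \<le> t")
  case False
  have "1 - exp (t - s) \<le> s - t" using exp_ge_add_one_self[of "t - s"] by linarith
  then have "exp s * (1 - exp (t - s)) \<le> exp s * (s - t)" by simp
  then show ?thesis using False by (simp add: algebra_simps exp_diff)
qed simp

lemma defect_exp_le:
  fixes a b :: "'a::metric_space list"
  assumes norm: "(\<Sum>j<k. exp (A1 (a!j))) = 1"
    and S: "\<And>y. \<bar>A1 y - A2 y\<bar> \<le> S" and L: "\<And>y z. \<bar>A2 y - A2 z\<bar> \<le> L * dist y z" and "0 \<le> L"
  shows "defect k (\<lambda>j. exp (A1 (a!j))) (\<lambda>j. exp (A2 (b!j))) \<le> S + L * match_dist k a b"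
proof -
  have "excess (\<lambda>j. exp (A1 (a!j))) (\<lambda>j. exp (A2 (b!j))) j \<le> exp (A1 (a!j)) * (S + L * match_dist k a b)"
    if "j < k" for j
  proof -
    have "\<bar>A1 (a!j) - A2 (b!j)\<bar> \<le> \<bar>A1 (a!j) - A2 (a!j)\<bar> + \<bar>A2 (a!j) - A2 (b!j)\<bar>" by simp
    also have "\<dots> \<le> S + L * match_dist k a b"
      using S[of "a!j"] L[of "a!j" "b!j"] mult_left_mono[OF match_dist_ge[of j k a b] \<open>0 \<le> L\<close>] that
      by linarith
    then have "exp (A1 (a!j)) * \<bar>A1 (a!j) - A2 (b!j)\<bar> \<le> exp (A1 (a!j)) * (S + L * match_dist k a b)"
      by simp
    then show ?thesis
      unfolding excess_def using exp_sub_min_exp_le[of "A1 (a!j)" "A2 (b!j)"] by linarith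
  qed
  then have "defect k (\<lambda>j. exp (A1 (a!j))) (\<lambda>j. exp (A2 (b!j))) \<le> (\<Sum>j<k. exp (A1 (a!j)) * (S + L * match_dist k a b))"
    unfolding defect_def by (intro sum_mono) simp
  also have "\<dots> = S + L * match_dist k a b" using norm by (simp add: sum_distrib_right[symmetric])
  finally show ?thesis .
qed

section \<open>The smoothed coupling kernel\<close>

lemma tendsto_Max_insert_0:
  assumes "finite I" "\<And>i. i \<in> I \<Longrightarrow> (\<lambda>n. f n i) \<longlonglongrightarrow> g i"
  shows "(\<lambda>n. Max (insert (0::real) (f n ` I))) \<longlonglongrightarrow> Max (insert 0 (g ` I))"
  using assms
proof (induction I rule: finite_induct)
  case (insert i I)
  have "Max (insert 0 (h ` insert i I)) = max (h i) (Max (insert 0 (h ` I)))" for h :: "_ \<Rightarrow> real"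
  proof -
    have "insert 0 (h ` insert i I) = insert (h i) (insert 0 (h ` I))" by auto
    then show ?thesis using insert(1) by simp
  qed
  then show ?case by (simp only:) (intro tendsto_max insert; simp)
qed simp

definition cutoff :: "nat \<Rightarrow> real \<Rightarrow> 'a::metric_space list \<Rightarrow> 'a list \<Rightarrow> real" where
  "cutoff k c a b = max 0 (c - match_dist k a b)"

lemma cutoff_nonneg: "0 \<le> cutoff k c a b"
  by (simp add: cutoff_def)

lemma seq_continuous_lists_cutoff: "seq_continuous_lists k (cutoff k c)"
  unfolding cutoff_def match_dist_def
  by (intro seq_continuous_listsI tendsto_max tendsto_diff tendsto_const tendsto_Max_insert_0 tendsto_dist)
     auto

lemma sum_nth_eq_transfer_op:
  assumes "is_ICS k F" "mset xs = F x"
  shows "(\<Sum>j<k. exp (A (xs!j)) * \<phi> (xs!j)) = transfer_op F A \<phi> x"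
proof -
  have "transfer_op F A \<phi> x = (\<Sum>y\<leftarrow>xs. exp (A y) * \<phi> y)"
    unfolding transfer_op_def assms(2)[symmetric] by (simp add: sum_mset_sum_list[symmetric])
  also have "\<dots> = (\<Sum>j<k. exp (A (xs!j)) * \<phi> (xs!j))"
    using is_ICS_length[OF assms] by (simp add: sum_list_sum_nth atLeast0LessThan)
  finally show ?thesis by simp
qed

lemma normalized_transfer_op_one: "normalized A F \<Longrightarrow> transfer_op F A (\<lambda>_. 1) x = 1"
  by (simp add: normalized_def transfer_op_def)

definition index_perm_list :: "nat \<Rightarrow> (nat \<Rightarrow> nat) list" where
  "index_perm_list k = (SOME l. set l = index_perms k \<and> distinct l)"

lemma index_perm_list: "set (index_perm_list k) = index_perms k" "distinct (index_perm_list k)"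
proof -
  have "\<exists>l. set l = index_perms k \<and> distinct l" by (rule finite_distinct_list) simp
  then have "set (index_perm_list k) = index_perms k \<and> distinct (index_perm_list k)"
    unfolding index_perm_list_def by (rule someI_ex)
  then show "set (index_perm_list k) = index_perms k" "distinct (index_perm_list k)" by auto
qed

lemma sum_list_product_index_perm_list:
  "(\<Sum>st\<leftarrow>List.product (index_perm_list k) (index_perm_list k). f st)
    = (\<Sum>\<sigma>\<in>index_perms k. \<Sum>\<tau>\<in>index_perms k. f (\<sigma>, \<tau>))"
  by (simp add: sum_list_distinct_conv_sum_set distinct_product index_perm_list sum.cartesian_product)

locale smoothed_coupling =
  fixes k :: nat and F1 F2 :: "'a::metric_space \<Rightarrow> 'a multiset" and A1 A2 :: "'a \<Rightarrow> real"
    and c :: real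
  assumes compact: "compact (UNIV :: 'a set)"
    and ics1: "is_ICS k F1" and ics2: "is_ICS k F2"
    and cont1: "continuous_on UNIV A1" and cont2: "continuous_on UNIV A2"
    and norm1: "normalized A1 F1" and norm2: "normalized A2 F2"
    and close_matching: "\<And>x. \<exists>xs ys. mset xs = F1 x \<and> mset ys = F2 x \<and> match_dist k xs ys < c"
begin

definition potential_coupling :: "'a list \<Rightarrow> 'a list \<Rightarrow> (('a \<times> 'a) \<times> real) list" where
  "potential_coupling a b = match_coupling k (\<lambda>j. exp (A1 (a!j))) (\<lambda>j. exp (A2 (b!j))) a b"

definition total_weight :: "'a \<Rightarrow> real" where
  "total_weight = sym_sum k F1 F2 (cutoff k c)"

abbreviation enum1 :: "(nat \<Rightarrow> nat) \<Rightarrow> 'a \<Rightarrow> 'a list" where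
  "enum1 \<sigma> x \<equiv> permute_list \<sigma> (enumeration F1 x)"

abbreviation enum2 :: "(nat \<Rightarrow> nat) \<Rightarrow> 'a \<Rightarrow> 'a list" where
  "enum2 \<tau> x \<equiv> permute_list \<tau> (enumeration F2 x)"

definition kernel_list :: "'a \<Rightarrow> (('a \<times> 'a) \<times> real) list" where
  "kernel_list x = concat (map (\<lambda>(\<sigma>, \<tau>).
     map (\<lambda>z. (fst z, cutoff k c (enum1 \<sigma> x) (enum2 \<tau> x) / total_weight x * snd z))
       (potential_coupling (enum1 \<sigma> x) (enum2 \<tau> x)))
     (List.product (index_perm_list k) (index_perm_list k)))"

lemma normalized_sum1: "mset xs = F1 x \<Longrightarrow> (\<Sum>j<k. exp (A1 (xs!j))) = 1"
  using sum_nth_eq_transfer_op[OF ics1, of xs x A1 "\<lambda>_. 1"] normalized_transfer_op_one[OF norm1] by simp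

lemma normalized_sum2: "mset ys = F2 x \<Longrightarrow> (\<Sum>j<k. exp (A2 (ys!j))) = 1"
  using sum_nth_eq_transfer_op[OF ics2, of ys x A2 "\<lambda>_. 1"] normalized_transfer_op_one[OF norm2] by simp

lemma total_weight_pos: "0 < total_weight x"
proof -
  obtain xs ys where xy: "mset xs = F1 x" "mset ys = F2 x" and close: "match_dist k xs ys < c"
    using close_matching by blast
  have id: "id \<in> index_perms k" by (simp add: index_perms_def permutes_id)
  have "0 < cutoff k c (permute_list id xs) (permute_list id ys)"
    using close by (simp add: cutoff_def permute_list_id)
  also have "\<dots> \<le> (\<Sum>\<tau>\<in>index_perms k. cutoff k c (permute_list id xs) (permute_list \<tau> ys))"
    by (intro member_le_sum id) (auto simp: cutoff_nonneg)
  also have "\<dots> \<le> total_weight x"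
    unfolding total_weight_def sym_sum_any_enumeration[OF ics1 ics2 xy]
    using member_le_sum[OF id, of "\<lambda>\<sigma>. \<Sum>\<tau>\<in>index_perms k. cutoff k c (permute_list \<sigma> xs) (permute_list \<tau> ys)"]
    by (simp add: sum_nonneg cutoff_nonneg)
  finally show ?thesis .
qed

lemma list_integral_kernel_list:
  "list_integral (kernel_list x) h =
     sym_sum k F1 F2 (\<lambda>a b. cutoff k c a b * list_integral (potential_coupling a b) h) x / total_weight x"
  unfolding kernel_list_def list_integral_concat map_map o_def case_prod_unfold list_integral_scale
    sum_list_product_index_perm_list sym_sum_def sum_divide_distrib
  by simp

lemma sym_sum_cutoff_mult_const:
  assumes "\<And>xs ys. mset xs = F1 x \<Longrightarrow> mset ys = F2 x \<Longrightarrow> G xs ys = r"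
  shows "sym_sum k F1 F2 (\<lambda>a b. cutoff k c a b * G a b) x = total_weight x * r"
  unfolding total_weight_def sym_sum_def sum_distrib_right
  using assms mset_permute_enumeration[OF ics1] mset_permute_enumeration[OF ics2]
  by (intro sum.cong refl) simp

lemma list_integral_kernel_list_fst:
  "list_integral (kernel_list x) (\<lambda>z. \<phi> (fst z)) = transfer_op F1 A1 \<phi> x"
proof -
  have "sym_sum k F1 F2 (\<lambda>a b. cutoff k c a b * list_integral (potential_coupling a b) (\<lambda>z. \<phi> (fst z))) x
      = total_weight x * transfer_op F1 A1 \<phi> x"
    by (rule sym_sum_cutoff_mult_const)
       (simp add: potential_coupling_def list_integral_match_coupling_fst normalized_sum1
          normalized_sum2 sum_nth_eq_transfer_op[OF ics1])
  then show ?thesis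
    unfolding list_integral_kernel_list using total_weight_pos[of x] by simp
qed

lemma list_integral_kernel_list_snd:
  "list_integral (kernel_list x) (\<lambda>z. \<phi> (snd z)) = transfer_op F2 A2 \<phi> x"
proof -
  have "sym_sum k F1 F2 (\<lambda>a b. cutoff k c a b * list_integral (potential_coupling a b) (\<lambda>z. \<phi> (snd z))) x
      = total_weight x * transfer_op F2 A2 \<phi> x"
    by (rule sym_sum_cutoff_mult_const)
       (simp add: potential_coupling_def list_integral_match_coupling_snd normalized_sum1
          normalized_sum2 sum_nth_eq_transfer_op[OF ics2])
  then show ?thesis
    unfolding list_integral_kernel_list using total_weight_pos[of x] by simp
qed

lemma kernel_list_wf: "pmf_of_list_wf (kernel_list x)"
proof (rule pmf_of_list_wfI)
  fix w assume "w \<in> set (map snd (kernel_list x))"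
  then obtain \<sigma> \<tau> z where z: "z \<in> set (potential_coupling (enum1 \<sigma> x) (enum2 \<tau> x))"
    and w: "w = cutoff k c (enum1 \<sigma> x) (enum2 \<tau> x) / total_weight x * snd z"
    unfolding kernel_list_def by auto
  show "0 \<le> w"
    unfolding w using total_weight_pos[of x] match_coupling_nonneg[OF _ _ z[unfolded potential_coupling_def]]
    by (simp add: cutoff_nonneg)
next
  show "(\<Sum>z\<leftarrow>kernel_list x. snd z) = 1"
    using list_integral_kernel_list_fst[of x "\<lambda>_. 1"] normalized_transfer_op_one[OF norm1]
    by (simp add: list_integral_def)
qed

lemma list_integral_kernel_list_dist_le:
  assumes D: "\<And>y z::'a. dist y z \<le> D" and S: "\<And>y. \<bar>A1 y - A2 y\<bar> \<le> S"
    and L: "\<And>y z. \<bar>A2 y - A2 z\<bar> \<le> L * dist y z" and "0 \<le> L"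
  shows "list_integral (kernel_list x) (\<lambda>z. dist (fst z) (snd z)) \<le> D * S + (L * D + 1) * c"
proof -
  let ?B = "D * S + (L * D + 1) * c"
  have "0 \<le> D" using D[of undefined undefined] by simp
  have "cutoff k c xs ys * list_integral (potential_coupling xs ys) (\<lambda>z. dist (fst z) (snd z))
      \<le> cutoff k c xs ys * ?B" if xy: "mset xs = F1 x" "mset ys = F2 x" for xs ys
  proof (cases "match_dist k xs ys \<le> c")
    case True
    have "list_integral (potential_coupling xs ys) (\<lambda>z. dist (fst z) (snd z))
        \<le> match_dist k xs ys + D * (S + L * match_dist k xs ys)"
      using list_integral_match_coupling_dist_le[OF _ _ D, of "\<lambda>j. exp (A1 (xs!j))" "\<lambda>j. exp (A2 (ys!j))" k xs ys]
        defect_exp_le[OF normalized_sum1[OF xy(1)] S L \<open>0 \<le> L\<close>, of ys] \<open>0 \<le> D\<close>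
      unfolding potential_coupling_def normalized_sum1[OF xy(1)]
      by (smt (verit) exp_ge_zero mult_left_mono)
    also have "\<dots> \<le> ?B"
    proof -
      have "D * (L * match_dist k xs ys) \<le> D * (L * c)"
        using True \<open>0 \<le> D\<close> \<open>0 \<le> L\<close> by (intro mult_left_mono) auto
      then show ?thesis using True by (simp add: algebra_simps)
    qed
    finally show ?thesis by (rule mult_left_mono) (rule cutoff_nonneg)
  qed (simp add: cutoff_def)
  then have "sym_sum k F1 F2 (\<lambda>a b. cutoff k c a b * list_integral (potential_coupling a b) (\<lambda>z. dist (fst z) (snd z))) x
      \<le> sym_sum k F1 F2 (\<lambda>a b. cutoff k c a b * ?B) x"
    unfolding sym_sum_def
    using mset_permute_enumeration[OF ics1] mset_permute_enumeration[OF ics2] by (intro sum_mono) auto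
  also have "\<dots> = total_weight x * ?B" by (rule sym_sum_cutoff_mult_const) simp
  finally show ?thesis
    unfolding list_integral_kernel_list using total_weight_pos[of x] by (simp add: divide_le_eq mult.commute)
qed

lemma isCont_list_integral_kernel_list:
  fixes h :: "'a \<times> 'a \<Rightarrow> real"
  assumes h: "continuous_on UNIV h" and hB: "\<And>z. \<bar>h z\<bar> \<le> B"
  shows "isCont (\<lambda>x. list_integral (kernel_list x) h) x"
proof -
  have "seq_continuous_lists k (\<lambda>a b. list_integral (potential_coupling a b) h)"
    unfolding potential_coupling_def
  proof (rule seq_continuous_listsI, rule tendsto_list_integral_match_coupling[OF _ _ _ _ h hB])
    fix a b :: "'a list" and as bs :: "nat \<Rightarrow> 'a list" and j
    assume ab: "\<And>j. j < k \<Longrightarrow> (\<lambda>n. as n ! j) \<longlonglongrightarrow> a ! j" "\<And>j. j < k \<Longrightarrow> (\<lambda>n. bs n ! j) \<longlonglongrightarrow> b ! j"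
      and "j < k"
    have "isCont A1 y" "isCont A2 y" for y
      using cont1 cont2 by (simp_all add: continuous_on_eq_continuous_at)
    then show "(\<lambda>n. exp (A1 (as n ! j))) \<longlonglongrightarrow> exp (A1 (a ! j))"
      "(\<lambda>n. exp (A2 (bs n ! j))) \<longlonglongrightarrow> exp (A2 (b ! j))"
      "(\<lambda>n. as n ! j) \<longlonglongrightarrow> a ! j" "(\<lambda>n. bs n ! j) \<longlonglongrightarrow> b ! j"
      using ab \<open>j < k\<close> by (auto intro: tendsto_exp isCont_tendsto_compose)
  qed
  then have "isCont (sym_sum k F1 F2 (\<lambda>a b. cutoff k c a b * list_integral (potential_coupling a b) h)) x"
    by (intro isCont_sym_sum ics1 ics2 seq_continuous_lists_mult seq_continuous_lists_cutoff)
  moreover have "isCont total_weight x"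
    unfolding total_weight_def by (intro isCont_sym_sum ics1 ics2 seq_continuous_lists_cutoff)
  ultimately show ?thesis
    unfolding list_integral_kernel_list using total_weight_pos[of x] by (intro isCont_divide) auto
qed

end

section \<open>Integrating the kernel\<close>

lemma compact_UNIV_continuous_bounded:
  assumes "compact (UNIV :: 'a::metric_space set)" "continuous_on UNIV (h :: 'a \<Rightarrow> real)"
  obtains B where "\<And>z. \<bar>h z\<bar> \<le> B"
proof -
  have "bounded (range h)" by (intro compact_imp_bounded compact_continuous_image assms)
  then show ?thesis using that unfolding bounded_iff by auto
qed

text \<open>The case U = UNIV is separate because the distance to the empty set is 0.\<close>

definition open_approx :: "'a::metric_space set \<Rightarrow> nat \<Rightarrow> 'a \<Rightarrow> real" where
  "open_approx U n y = (if U = UNIV then 1 else min 1 (real n * infdist y (- U)))"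

lemma continuous_on_open_approx: "continuous_on UNIV (open_approx U n)"
  unfolding open_approx_def by (cases "U = UNIV") (simp_all add: continuous_intros)

lemma open_approx_bounds: "0 \<le> open_approx U n y" "open_approx U n y \<le> 1"
  unfolding open_approx_def by (auto simp: infdist_nonneg)

lemma open_approx_tendsto_indicator:
  assumes "open U"
  shows "(\<lambda>n. open_approx U n y) \<longlonglongrightarrow> indicator U y"
proof (cases "U \<noteq> UNIV \<and> y \<in> U")
  case True
  then have pos: "0 < infdist y (- U)" using assms by (intro infdist_pos_not_in_closed) auto
  obtain N :: nat where "inverse (infdist y (- U)) < real N" using reals_Archimedean2 by blast
  then have "1 < real N * infdist y (- U)" using pos by (simp add: field_simps)
  also have "\<dots> \<le> real n * infdist y (- U)" if "N \<le> n" for n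
    using that pos by (intro mult_right_mono) auto
  finally have "open_approx U n y = 1" if "N \<le> n" for n
    using True that by (simp add: open_approx_def)
  then show ?thesis using True by (auto intro: tendsto_eventually eventually_sequentiallyI)
qed (cases "U = UNIV"; simp add: open_approx_def infdist_zero)

lemma finite_measure_eqI_continuous_integrals:
  fixes M N :: "'a::metric_space measure"
  assumes "finite_measure M" "finite_measure N" "sets M = sets borel" "sets N = sets borel"
    and eq: "\<And>\<phi>. continuous_on UNIV \<phi> \<Longrightarrow> integral\<^sup>L M \<phi> = integral\<^sup>L N (\<phi> :: 'a \<Rightarrow> real)"
  shows "M = N"
proof (rule measure_eqI_generator_eq[where E="{S. open S}" and \<Omega>=UNIV and A="\<lambda>_. UNIV"])
  show "sets M = sigma_sets UNIV {S. open S}" "sets N = sigma_sets UNIV {S. open S}"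
    using assms(3,4) sets_borel by simp_all
  show "emeasure M UNIV \<noteq> \<infinity>" using assms(1) by (simp add: finite_measure.emeasure_finite)
  fix U :: "'a set" assume "U \<in> {S. open S}"
  then have U: "open U" by simp
  have approx: "(\<lambda>n. integral\<^sup>L P (open_approx U n)) \<longlonglongrightarrow> measure P U"
    if "finite_measure P" "sets P = sets borel" for P :: "'a measure"
  proof -
    have "(\<lambda>n. integral\<^sup>L P (open_approx U n)) \<longlonglongrightarrow> integral\<^sup>L P (indicator U)"
    proof (rule integral_dominated_convergence[where w="\<lambda>_. 1"])
      show "indicator U \<in> borel_measurable P" "open_approx U n \<in> borel_measurable P" for n
        using U that(2) continuous_on_open_approx[THEN borel_measurable_continuous_onI]
        by (simp_all add: borel_open measurable_cong_sets[OF that(2) refl])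
      show "integrable P (\<lambda>_. 1::real)" using that(1) by (simp add: finite_measure.integrable_const)
      show "AE x in P. (\<lambda>n. open_approx U n x) \<longlonglongrightarrow> indicator U x"
        using open_approx_tendsto_indicator[OF U] by simp
      show "AE x in P. norm (open_approx U n x) \<le> 1" for n
        using open_approx_bounds[of U n] by simp
    qed
    then show ?thesis using U that(2) by (simp add: borel_open)
  qed
  have "measure M U = measure N U"
    using LIMSEQ_unique[OF approx[OF assms(1,3)]] approx[OF assms(2,4)]
    by (simp add: eq continuous_on_open_approx)
  then show "emeasure M U = emeasure N U"
    using assms U by (simp add: finite_measure.emeasure_eq_measure)
qed (auto simp: Int_stable_def)

lemma sets_pair_borel_open_rectangles:
  "sets (borel \<Otimes>\<^sub>M borel :: ('a::topological_space \<times> 'a) measure) =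
     sigma_sets UNIV {a \<times> b | a b. open a \<and> open b}"
proof -
  have "sets (borel \<Otimes>\<^sub>M borel :: ('a \<times> 'a) measure) =
     sets (sigma (space borel \<times> space borel) {a \<times> b | a b. a \<in> {S::'a set. open S} \<and> b \<in> {S. open S}})"
    by (rule sets_pair_eq[where Ca="{UNIV}" and Cb="{UNIV}"]) (auto simp: sets_borel)
  then show ?thesis by (subst (asm) sets_measure_of) auto
qed

context smoothed_coupling
begin

definition kernel :: "'a \<Rightarrow> ('a \<times> 'a) measure" where
  "kernel x = distr (measure_pmf (pmf_of_list (kernel_list x))) (borel \<Otimes>\<^sub>M borel) id"

lemma sets_kernel [simp]: "sets (kernel x) = sets (borel \<Otimes>\<^sub>M borel)"
  by (simp add: kernel_def)

lemma space_kernel [simp]: "space (kernel x) = UNIV"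
  using sets_eq_imp_space_eq[OF sets_kernel] by (simp add: space_pair_measure)

lemma prob_space_kernel: "prob_space (kernel x)"
  unfolding kernel_def
  by (rule prob_space.prob_space_distr[OF prob_space_measure_pmf]) (simp add: space_pair_measure)

lemma integral_kernel:
  "f \<in> borel_measurable (borel \<Otimes>\<^sub>M borel) \<Longrightarrow> integral\<^sup>L (kernel x) f = list_integral (kernel_list x) f"
  unfolding kernel_def
  by (subst integral_distr) (simp_all add: integral_pmf_of_list[OF kernel_list_wf] space_pair_measure)

lemma emeasure_kernel:
  assumes "A \<in> sets (borel \<Otimes>\<^sub>M borel)"
  shows "emeasure (kernel x) A = ennreal (list_integral (kernel_list x) (indicator A))"
  unfolding kernel_def using assms
  by (simp add: emeasure_distr space_pair_measure emeasure_pmf_of_list[OF kernel_list_wf] sum_list_snd_filter)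

lemma measurable_list_integral_kernel_list:
  assumes "sets M = sets (borel :: 'a measure)" "continuous_on UNIV h" "\<And>z. \<bar>h z\<bar> \<le> B"
  shows "(\<lambda>x. list_integral (kernel_list x) h) \<in> borel_measurable M"
proof -
  have "continuous_on UNIV (\<lambda>x. list_integral (kernel_list x) h)"
    using isCont_list_integral_kernel_list[OF assms(2,3)] by (simp add: continuous_on_eq_continuous_at)
  then show ?thesis
    using borel_measurable_continuous_onI measurable_cong_sets[OF assms(1) refl] by blast
qed

lemma measurable_kernel:
  assumes sets: "sets M = sets (borel :: 'a measure)"
  shows "kernel \<in> measurable M (subprob_algebra (borel \<Otimes>\<^sub>M borel))"
proof (rule measurable_subprob_algebra_generated[where \<Omega>=UNIV and G="{a \<times> b | a b. open a \<and> open b}"])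
  show "Int_stable {a \<times> b | a b. open (a::'a set) \<and> open (b::'a set)}"
  proof (rule Int_stableI)
    fix X Y assume "X \<in> {a \<times> b | a b. open (a::'a set) \<and> open (b::'a set)}"
      "Y \<in> {a \<times> b | a b. open (a::'a set) \<and> open (b::'a set)}"
    then obtain a b c d :: "'a set" where "X = a \<times> b" "Y = c \<times> d" "open a" "open b" "open c" "open d"
      by blast
    then show "X \<inter> Y \<in> {a \<times> b | a b. open (a::'a set) \<and> open (b::'a set)}"
      by (intro CollectI exI[of _ "a \<inter> c"] exI[of _ "b \<inter> d"]) auto
  qed
  show "subprob_space (kernel x)" for x by (rule prob_space_imp_subprob_space[OF prob_space_kernel])
  show "(\<lambda>x. emeasure (kernel x) UNIV) \<in> borel_measurable M"
    using prob_space.emeasure_space_1[OF prob_space_kernel] by simp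
  fix A assume "A \<in> {a \<times> b | a b. open (a::'a set) \<and> open (b::'a set)}"
  then obtain a b :: "'a set" where A: "A = a \<times> b" "open a" "open b" by blast
  define h where "h n z = open_approx a n (fst z) * open_approx b n (snd z)" for n and z :: "'a \<times> 'a"
  have cont: "continuous_on UNIV (h n)" for n
    unfolding h_def
    by (intro continuous_on_mult continuous_on_compose2[OF continuous_on_open_approx] continuous_intros)
       auto
  have bound: "\<bar>h n z\<bar> \<le> 1" for n z
    unfolding h_def using open_approx_bounds[of a n "fst z"] open_approx_bounds[of b n "snd z"]
    by (simp add: abs_mult mult_le_one)
  have lim: "(\<lambda>n. list_integral (kernel_list x) (h n)) \<longlonglongrightarrow> list_integral (kernel_list x) (indicator A)" for x
  proof (rule tendsto_list_integral)
    show "(\<lambda>n. h n z) \<longlonglongrightarrow> indicator A z" for z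
      unfolding h_def A(1) indicator_times
      by (rule tendsto_mult; rule open_approx_tendsto_indicator; fact)
  qed
  have "(\<lambda>x. list_integral (kernel_list x) (indicator A)) \<in> borel_measurable M"
    by (rule borel_measurable_LIMSEQ_real[OF lim measurable_list_integral_kernel_list[OF sets cont bound]])
  then show "(\<lambda>x. emeasure (kernel x) A) \<in> borel_measurable M"
    using A by (simp add: emeasure_kernel borel_open)
qed (auto simp: sets_pair_borel_open_rectangles)

lemma
  assumes "prob_space \<mu>" "sets \<mu> = sets borel"
  shows sets_bind_kernel: "sets (\<mu> \<bind> kernel) = sets (borel \<Otimes>\<^sub>M borel)"
    and prob_space_bind_kernel: "prob_space (\<mu> \<bind> kernel)"
proof -
  have "space \<mu> \<noteq> {}" using sets_eq_imp_space_eq[OF assms(2)] by simp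
  then show "sets (\<mu> \<bind> kernel) = sets (borel \<Otimes>\<^sub>M borel)"
    by (rule sets_bind_measurable[OF measurable_kernel[OF assms(2)]])
  show "prob_space (\<mu> \<bind> kernel)"
    by (rule prob_space.prob_space_bind[OF assms(1) _ measurable_kernel[OF assms(2)]])
       (simp add: prob_space_kernel)
qed

lemma integral_bind_kernel:
  assumes "prob_space \<mu>" "sets \<mu> = sets borel"
    and f: "f \<in> borel_measurable (borel \<Otimes>\<^sub>M borel)" and bound: "\<And>z. \<bar>f z\<bar> \<le> B"
  shows "integral\<^sup>L (\<mu> \<bind> kernel) f = (\<integral>x. list_integral (kernel_list x) f \<partial>\<mu>)"
proof -
  have "integral\<^sup>L (\<mu> \<bind> kernel) f = (\<integral>x. integral\<^sup>L (kernel x) f \<partial>\<mu>)"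
    using assms(1) prob_space.emeasure_space_1[OF prob_space_kernel]
    by (intro integral_bind[OF f _ measurable_kernel[OF assms(2)], where B=B and B'=1])
       (auto simp: bound prob_space.finite_measure)
  then show ?thesis by (simp add: integral_kernel[OF f])
qed

lemma distr_bind_kernel_eq_dual_transfer:
  fixes g :: "'a \<times> 'a \<Rightarrow> 'a"
  assumes "prob_space \<mu>" "sets \<mu> = sets borel"
    and g: "g \<in> borel \<Otimes>\<^sub>M borel \<rightarrow>\<^sub>M borel"
    and marginal: "\<And>\<phi> x. list_integral (kernel_list x) (\<lambda>z. \<phi> (g z)) = transfer_op F A \<phi> x"
    and dual: "is_dual_transfer F A \<mu> \<nu>"
  shows "distr (\<mu> \<bind> kernel) borel g = \<nu>"
proof (rule finite_measure_eqI_continuous_integrals)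
  have g': "g \<in> (\<mu> \<bind> kernel) \<rightarrow>\<^sub>M borel"
    using g measurable_cong_sets[OF sets_bind_kernel[OF assms(1,2)] refl] by blast
  then show "finite_measure (distr (\<mu> \<bind> kernel) borel g)"
    by (intro prob_space.finite_measure prob_space.prob_space_distr prob_space_bind_kernel assms)
  show "finite_measure \<nu>" "sets \<nu> = sets borel" using dual by (simp_all add: is_dual_transfer_def)
  fix \<phi> :: "'a \<Rightarrow> real" assume \<phi>: "continuous_on UNIV \<phi>"
  obtain B where B: "\<And>y. \<bar>\<phi> y\<bar> \<le> B" using compact_UNIV_continuous_bounded[OF compact \<phi>] by blast
  have \<phi>m: "\<phi> \<in> borel_measurable borel" using \<phi> by (rule borel_measurable_continuous_onI)
  have "integral\<^sup>L (distr (\<mu> \<bind> kernel) borel g) \<phi> = integral\<^sup>L (\<mu> \<bind> kernel) (\<lambda>z. \<phi> (g z))"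
    by (rule integral_distr[OF g' \<phi>m])
  also have "\<dots> = (\<integral>x. list_integral (kernel_list x) (\<lambda>z. \<phi> (g z)) \<partial>\<mu>)"
    by (rule integral_bind_kernel[OF assms(1,2) measurable_compose[OF g \<phi>m] B])
  also have "\<dots> = (\<integral>x. transfer_op F A \<phi> x \<partial>\<mu>)"
    by (simp add: marginal)
  also have "\<dots> = integral\<^sup>L \<nu> \<phi>" using dual \<phi> by (simp add: is_dual_transfer_def)
  finally show "integral\<^sup>L (distr (\<mu> \<bind> kernel) borel g) \<phi> = integral\<^sup>L \<nu> \<phi>" .
qed simp

lemma bind_kernel_in_couplings:
  assumes "prob_space \<mu>" "sets \<mu> = sets borel"
    and "is_dual_transfer F1 A1 \<mu> \<nu>1" "is_dual_transfer F2 A2 \<mu> \<nu>2"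
  shows "\<mu> \<bind> kernel \<in> couplings \<nu>1 \<nu>2"
  unfolding couplings_def
  using assms sets_bind_kernel prob_space_bind_kernel
    distr_bind_kernel_eq_dual_transfer[OF assms(1,2) measurable_fst list_integral_kernel_list_fst assms(3)]
    distr_bind_kernel_eq_dual_transfer[OF assms(1,2) measurable_snd list_integral_kernel_list_snd assms(4)]
  by blast

lemma transport_cost_bind_kernel_le:
  assumes "prob_space \<mu>" "sets \<mu> = sets borel"
    and D: "\<And>y z::'a. dist y z \<le> D" and S: "\<And>y. \<bar>A1 y - A2 y\<bar> \<le> S"
    and L: "\<And>y z. \<bar>A2 y - A2 z\<bar> \<le> L * dist y z" and "0 \<le> L"
  shows "integral\<^sup>L (\<mu> \<bind> kernel) (\<lambda>z. dist (fst z) (snd z)) \<le> D * S + (L * D + 1) * c"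
proof -
  let ?d = "\<lambda>z::'a \<times> 'a. dist (fst z) (snd z)" and ?B = "D * S + (L * D + 1) * c"
  have cost: "list_integral (kernel_list x) ?d \<le> ?B" for x
    by (rule list_integral_kernel_list_dist_le[OF D S L \<open>0 \<le> L\<close>])
  have cost_nonneg: "0 \<le> list_integral (kernel_list x) ?d" for x
    using kernel_list_wf[of x] by (intro list_integral_nonneg) (auto simp: pmf_of_list_wf_def)
  \<comment> \<open>Integrability yields measurability of the distance on the product; otherwise the integral is 0.\<close>
  show ?thesis
  proof (cases "integrable (\<mu> \<bind> kernel) ?d")
    case True
    then have "?d \<in> borel_measurable (borel \<Otimes>\<^sub>M borel)"
      using measurable_cong_sets[OF sets_bind_kernel[OF assms(1,2)] refl] by blast
    then have "integral\<^sup>L (\<mu> \<bind> kernel) ?d = (\<integral>x. list_integral (kernel_list x) ?d \<partial>\<mu>)"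
      by (rule integral_bind_kernel[OF assms(1,2), where B=D]) (simp add: D)
    also have "\<dots> \<le> (\<integral>x. ?B \<partial>\<mu>)"
    proof (rule integral_mono)
      show "integrable \<mu> (\<lambda>x. list_integral (kernel_list x) ?d)"
        using cost cost_nonneg D
        by (intro finite_measure.integrable_const_bound[where B="?B"] prob_space.finite_measure
            assms measurable_list_integral_kernel_list[where B=D] continuous_intros) auto
    qed (use cost assms(1) prob_space.finite_measure finite_measure.integrable_const in auto)
    also have "\<dots> = ?B" using assms(1) by (simp add: prob_space.prob_space)
    finally show ?thesis .
  next
    case False
    have "0 \<le> ?B" using cost_nonneg cost order_trans by blast
    then show ?thesis using False by (simp add: not_integrable_integral_eq)
  qed
qed

lemma W1_le:
  assumes "prob_space \<mu>" "sets \<mu> = sets borel"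
    and "is_dual_transfer F1 A1 \<mu> \<nu>1" "is_dual_transfer F2 A2 \<mu> \<nu>2"
    and "\<And>y z::'a. dist y z \<le> D" "\<And>y. \<bar>A1 y - A2 y\<bar> \<le> S"
    and "\<And>y z. \<bar>A2 y - A2 z\<bar> \<le> L * dist y z" "0 \<le> L"
  shows "W1 \<nu>1 \<nu>2 \<le> D * S + (L * D + 1) * c"
proof -
  have "bdd_below ((\<lambda>\<pi>. integral\<^sup>L \<pi> (\<lambda>z. dist (fst z) (snd z))) ` couplings \<nu>1 \<nu>2)"
    by (rule bdd_belowI[of _ 0]) auto
  then have "W1 \<nu>1 \<nu>2 \<le> integral\<^sup>L (\<mu> \<bind> kernel) (\<lambda>z. dist (fst z) (snd z))"
    unfolding W1_def by (rule cINF_lower[OF _ bind_kernel_in_couplings[OF assms(1-4)]])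
  also have "\<dots> \<le> D * S + (L * D + 1) * c"
    by (rule transport_cost_bind_kernel_le[OF assms(1,2,5-8)])
  finally show ?thesis .
qed

end

lemma match_dist_le:
  fixes a b :: "'a::metric_space list"
  assumes "\<And>y z::'a. dist y z \<le> D" "0 \<le> D"
  shows "match_dist k a b \<le> D"
  unfolding match_dist_def using assms by (subst Max_le_iff) auto

lemma d_inf_eq_match_dist:
  assumes "is_ICS k F1"
  shows "d_inf F1 F2 = (SUP x. INF p\<in>{(xs, ys). mset xs = F1 x \<and> mset ys = F2 x}. match_dist k (fst p) (snd p))"
  unfolding d_inf_def
proof (intro SUP_cong INF_cong refl)
  fix x p assume "p \<in> {(xs, ys). mset xs = F1 x \<and> mset ys = F2 x}"
  then have "length (fst p) = k" using is_ICS_length[OF assms] by auto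
  then show "Max (insert 0 {dist (fst p ! j) (snd p ! j) |j. j < length (fst p)}) = match_dist k (fst p) (snd p)"
    unfolding match_dist_def by (metis (no_types) image_Collect lessThan_def)
qed

lemma d_inf_attained:
  fixes F1 F2 :: "'a::metric_space \<Rightarrow> 'a multiset"
  assumes "is_ICS k F1" and D: "\<And>y z::'a. dist y z \<le> D"
  obtains xs ys where "mset xs = F1 x" "mset ys = F2 x" "match_dist k xs ys \<le> d_inf F1 F2"
proof -
  define P where "P x = {(xs, ys). mset xs = F1 x \<and> mset ys = F2 x}" for x :: 'a
  have "P x = {xs. mset xs = mset (enumeration F1 x)} \<times> {ys. mset ys = mset (enumeration F2 x)}" for x
    by (auto simp: P_def)
  then have fin: "finite (P x)" for x
    using mset_eq_finite[of "enumeration F1 x"] mset_eq_finite[of "enumeration F2 x"] by simp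
  have ne: "(enumeration F1 x, enumeration F2 x) \<in> P x" for x by (simp add: P_def)
  have "0 \<le> D" using D[of undefined undefined] by simp
  let ?f = "\<lambda>p. match_dist k (fst p) (snd p)"
  have inf_eq_min: "(INF p\<in>P x. ?f p) = Min (?f ` P x)"
    using fin[of x] ne[of x] by (intro cInf_eq_Min) auto
  have "Min (?f ` P x) \<in> ?f ` P x"
    using fin[of x] ne[of x] by (intro Min_in) auto
  then obtain p where p: "p \<in> P x" "Min (?f ` P x) = ?f p"
    by (rule imageE)
  have "(INF p\<in>P y. match_dist k (fst p) (snd p)) \<le> D" for y
    using fin[of y] match_dist_le[OF D \<open>0 \<le> D\<close>]
    by (intro cINF_lower2[OF _ ne]) (auto intro: bdd_below_finite finite_imageI)
  then have "(INF p\<in>P x. match_dist k (fst p) (snd p)) \<le> d_inf F1 F2"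
    unfolding d_inf_eq_match_dist[OF assms(1)] P_def[symmetric]
    by (intro cSUP_upper bdd_aboveI2) auto
  then show ?thesis using that p inf_eq_min by (auto simp: P_def)
qed

lemma
  assumes "lipschitz_on C UNIV f"
  shows Lip_nonneg: "0 \<le> Lip f"
    and abs_diff_le_Lip: "\<bar>f y - f z\<bar> \<le> Lip f * dist y z"
proof -
  have ne: "{C. lipschitz_on C UNIV f} \<noteq> {}" using assms by blast
  show "0 \<le> Lip f"
    unfolding Lip_def using ne by (auto intro: cInf_greatest lipschitz_on_nonneg)
  show "\<bar>f y - f z\<bar> \<le> Lip f * dist y z"
  proof (cases "y = z")
    case False
    then have "\<bar>f y - f z\<bar> / dist y z \<le> C'" if "lipschitz_on C' UNIV f" for C'
      using lipschitz_onD[OF that, of y z] by (simp add: dist_real_def divide_le_eq)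
    then have "\<bar>f y - f z\<bar> / dist y z \<le> Lip f"
      unfolding Lip_def using ne by (intro cInf_greatest) auto
    then show ?thesis using False by (simp add: divide_le_eq)
  qed simp
qed

lemma abs_le_sup_norm:
  assumes "\<And>x. \<bar>f x\<bar> \<le> B"
  shows "\<bar>f x\<bar> \<le> sup_norm f"
  unfolding sup_norm_def by (rule cSUP_upper) (auto intro: bdd_aboveI2 assms)

theorem mainTheorem8:
  fixes F1 F2 :: "'a::metric_space \<Rightarrow> 'a multiset"
    and A1 A2 :: "'a \<Rightarrow> real"
    and k :: nat
    and \<mu> \<nu>1 \<nu>2 :: "'a measure"
  assumes "compact (UNIV :: 'a set)"
    and "is_ICS k F1" and "is_ICS k F2"
    and "continuous_on UNIV A1"
    and "normalized A1 F1" and "normalized A2 F2"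
    and "\<exists>C. lipschitz_on C UNIV A2"
    and "prob_space \<mu>" and "sets \<mu> = sets borel"
    and "is_dual_transfer F1 A1 \<mu> \<nu>1"
    and "is_dual_transfer F2 A2 \<mu> \<nu>2"
  shows "W1 \<nu>1 \<nu>2 \<le> diameter (UNIV :: 'a set) * sup_norm (\<lambda>x. A1 x - A2 x)
           + (Lip A2 * diameter (UNIV :: 'a set) + 1) * d_inf F1 F2"
proof -
  let ?D = "diameter (UNIV :: 'a set)" and ?S = "sup_norm (\<lambda>x. A1 x - A2 x)" and ?L = "Lip A2"
  obtain C where C: "lipschitz_on C UNIV A2" using assms(7) by blast
  have cont2: "continuous_on UNIV A2" by (rule lipschitz_on_continuous_on[OF C])
  have D: "dist y z \<le> ?D" for y z :: 'a
    by (intro diameter_bounded_bound compact_imp_bounded assms(1)) auto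
  obtain B where "\<And>x. \<bar>A1 x - A2 x\<bar> \<le> B"
    using compact_UNIV_continuous_bounded[OF assms(1) continuous_on_diff[OF assms(4) cont2]] by blast
  then have S: "\<bar>A1 y - A2 y\<bar> \<le> ?S" for y by (rule abs_le_sup_norm)
  have bound: "W1 \<nu>1 \<nu>2 \<le> ?D * ?S + (?L * ?D + 1) * c" if "d_inf F1 F2 < c" for c
  proof -
    interpret smoothed_coupling k F1 F2 A1 A2 c
    proof
      fix x
      obtain xs ys where "mset xs = F1 x" "mset ys = F2 x" "match_dist k xs ys \<le> d_inf F1 F2"
        by (rule d_inf_attained[OF assms(2) D])
      then show "\<exists>xs ys. mset xs = F1 x \<and> mset ys = F2 x \<and> match_dist k xs ys < c"
        using that by force
    qed (fact assms(1-6) cont2)+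
    show ?thesis by (rule W1_le[OF assms(8-11) D S abs_diff_le_Lip[OF C] Lip_nonneg[OF C]])
  qed
  have pos: "0 < ?L * ?D + 1"
    using Lip_nonneg[OF C] D[of undefined undefined] by (simp add: add_nonneg_pos)
  have "(W1 \<nu>1 \<nu>2 - ?D * ?S) / (?L * ?D + 1) \<le> d_inf F1 F2"
  proof (rule dense_ge)
    fix c assume "d_inf F1 F2 < c"
    then have "W1 \<nu>1 \<nu>2 - ?D * ?S \<le> c * (?L * ?D + 1)" using bound[of c] by (simp add: mult.commute)
    then show "(W1 \<nu>1 \<nu>2 - ?D * ?S) / (?L * ?D + 1) \<le> c" using pos by (simp add: pos_divide_le_eq)
  qed
  then have "W1 \<nu>1 \<nu>2 - ?D * ?S \<le> d_inf F1 F2 * (?L * ?D + 1)" using pos by (simp add: pos_divide_le_eq)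
  then show ?thesis by (simp add: mult.commute)
qed

end
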